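(* Let $C_*^{\mathbb{Q}}$ be a chain complex of $\mathbb{Q}$-vector spaces, $C_*^{\mathbb{R}}=C_*^{\mathbb{Q}}\otimes_{\mathbb{Q}}\mathbb{R}$, and let $\|\cdot\|$ be a norm on $C_*^{\mathbb{R}}$. Let $a\in Z_n^{\mathbb{R}}$ be a real $n$-cycle whose homology class is rational, i.e. $[a]\in H_n(C_*^{\mathbb{Q}})\subseteq H_n(C_*^{\mathbb{R}})$. Then for every $\varepsilon>0$ there is a rational $n$-cycle $a'\in Z_n^{\mathbb{Q}}$ with $[a']=[a]$ in $H_n(C_*^{\mathbb{R}})$ and $\|a-a'\|\leq\varepsilon$.
   Context: $Z_n^{\mathbb{R}}$ and $Z_n^{\mathbb{Q}}$ denote the $n$-cycles of $C_*^{\mathbb{R}}$ and $C_*^{\mathbb{Q}}$; $H_n(C_*^{\mathbb{Q}})$ is viewed inside $H_n(C_*^{\mathbb{R}})\cong H_n(C_*^{\mathbb{Q}})\otimes_{\mathbb{Q}}\mathbb{R}$. *)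

theory Defs
  imports "HOL-Analysis.Analysis"
begin

text \<open>A chain complex of rational vector spaces together with its real extension
  C^R = C^Q \<otimes>_Q R, all degrees living inside one ambient real vector space 'v:
  CR k is the (real) chain group in degree k, CQ k the rational chain group in degree k,
  d k the boundary map C_k \<rightarrow> C_{k-1}.\<close>

definition rat_subspace :: "'v::real_vector set \<Rightarrow> bool" where
  "rat_subspace S \<longleftrightarrow> 0 \<in> S \<and> (\<forall>x\<in>S. \<forall>y\<in>S. x + y \<in> S)
     \<and> (\<forall>q::rat. \<forall>x\<in>S. of_rat q *\<^sub>R x \<in> S)"

definition rat_independent :: "'v::real_vector set \<Rightarrow> bool" where
  "rat_independent S \<longleftrightarrow> (\<forall>T c. finite T \<longrightarrow> T \<subseteq> S \<longrightarrow>
      (\<Sum>v\<in>T. of_rat (c v) *\<^sub>R v) = 0 \<longrightarrow> (\<forall>v\<in>T. c v = (0::rat)))"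

text \<open>The real space R is the scalar extension of the rational subspace Q:
  Q spans R over the reals and Q-linearly independent families in Q stay
  R-linearly independent (i.e. the canonical map Q \<otimes>_Q \<real> \<rightarrow> R is an isomorphism).\<close>
definition rat_form_of :: "'v::real_vector set \<Rightarrow> 'v set \<Rightarrow> bool" where
  "rat_form_of Q R \<longleftrightarrow> rat_subspace Q \<and> span Q = R
     \<and> (\<forall>S\<subseteq>Q. rat_independent S \<longrightarrow> independent S)"

definition rat_chain_complex ::
  "(int \<Rightarrow> 'v::real_vector set) \<Rightarrow> (int \<Rightarrow> 'v set) \<Rightarrow> (int \<Rightarrow> 'v \<Rightarrow> 'v) \<Rightarrow> bool" where
  "rat_chain_complex CQ CR d \<longleftrightarrow>
     (\<forall>k. rat_form_of (CQ k) (CR k))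
   \<and> (\<forall>k. \<forall>x\<in>CR k. \<forall>y\<in>CR k. d k (x + y) = d k x + d k y)
   \<and> (\<forall>k. \<forall>c. \<forall>x\<in>CR k. d k (c *\<^sub>R x) = c *\<^sub>R d k x)
   \<and> (\<forall>k. d k ` CR k \<subseteq> CR (k - 1))
   \<and> (\<forall>k. d k ` CQ k \<subseteq> CQ (k - 1))
   \<and> (\<forall>k. \<forall>x\<in>CR k. d (k - 1) (d k x) = 0)"

definition norm_on :: "'v::real_vector set \<Rightarrow> ('v \<Rightarrow> real) \<Rightarrow> bool" where
  "norm_on S N \<longleftrightarrow> (\<forall>x\<in>S. 0 \<le> N x \<and> (N x = 0 \<longleftrightarrow> x = 0))
     \<and> (\<forall>x\<in>S. \<forall>y\<in>S. N (x + y) \<le> N x + N y)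
     \<and> (\<forall>c. \<forall>x\<in>S. N (c *\<^sub>R x) = \<bar>c\<bar> * N x)"

definition cycles :: "(int \<Rightarrow> 'v::real_vector set) \<Rightarrow> (int \<Rightarrow> 'v \<Rightarrow> 'v) \<Rightarrow> int \<Rightarrow> 'v set" where
  "cycles C d n = {x \<in> C n. d n x = 0}"

definition homologous_R ::
  "(int \<Rightarrow> 'v::real_vector set) \<Rightarrow> (int \<Rightarrow> 'v \<Rightarrow> 'v) \<Rightarrow> int \<Rightarrow> 'v \<Rightarrow> 'v \<Rightarrow> bool" where
  "homologous_R CR d n x y \<longleftrightarrow> x - y \<in> d (n + 1) ` CR (n + 1)"

end

theory Submission
  imports Defs
begin

text \<open>Write \<open>a - b = d c\<close> with \<open>b\<close> a rational cycle and \<open>c\<close> a real chain. The function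
  \<open>x \<mapsto> \<parallel>d x\<parallel>\<close> is a seminorm on the real chains, and in any seminorm the rational combinations
  of a rational form are dense in its real span (approximate the finitely many real coefficients
  by rationals). Choosing a rational chain \<open>c'\<close> close to \<open>c\<close> in this seminorm,
  \<open>a' = b + d c'\<close> is a rational cycle homologous to \<open>a\<close> with \<open>\<parallel>a - a'\<parallel> = \<parallel>d (c - c')\<parallel>\<close> small.\<close>

definition seminorm_on :: "'v::real_vector set \<Rightarrow> ('v \<Rightarrow> real) \<Rightarrow> bool" where
  "seminorm_on S N \<longleftrightarrow> (\<forall>x\<in>S. \<forall>y\<in>S. N (x + y) \<le> N x + N y)
     \<and> (\<forall>c. \<forall>x\<in>S. N (c *\<^sub>R x) = \<bar>c\<bar> * N x)"

lemma norm_on_imp_seminorm_on: "norm_on S N \<Longrightarrow> seminorm_on S N"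
  by (simp add: norm_on_def seminorm_on_def)

lemma seminorm_on_compose:
  assumes "seminorm_on S' N" "f ` S \<subseteq> S'"
    and "\<forall>x\<in>S. \<forall>y\<in>S. f (x + y) = f x + f y"
    and "\<forall>c. \<forall>x\<in>S. f (c *\<^sub>R x) = c *\<^sub>R f x"
  shows "seminorm_on S (N \<circ> f)"
  using assms by (auto simp: seminorm_on_def image_subset_iff)

lemma seminorm_on_zero:
  assumes "seminorm_on S N" "subspace S"
  shows "N 0 = 0"
proof -
  have "N ((0::real) *\<^sub>R 0) = \<bar>0\<bar> * N 0"
    using assms subspace_0 unfolding seminorm_on_def by blast
  then show ?thesis by simp
qed

lemma seminorm_on_nonneg:
  assumes N: "seminorm_on S N" and S: "subspace S" and x: "x \<in> S"
  shows "0 \<le> N x"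
proof -
  have neg: "N ((-1) *\<^sub>R x) = \<bar>-1\<bar> * N x"
    using N x unfolding seminorm_on_def by blast
  have "0 = N (x + (-1) *\<^sub>R x)"
    using seminorm_on_zero[OF N S] by simp
  also have "\<dots> \<le> N x + N ((-1) *\<^sub>R x)"
    using N x subspace_scale[OF S x] unfolding seminorm_on_def by blast
  also have "\<dots> = 2 * N x"
    using neg by simp
  finally show ?thesis by simp
qed

lemma seminorm_on_sum_le:
  assumes N: "seminorm_on S N" and S: "subspace S"
    and "finite T" "\<And>v. v \<in> T \<Longrightarrow> g v \<in> S"
  shows "N (\<Sum>v\<in>T. g v) \<le> (\<Sum>v\<in>T. N (g v))"
  using assms(3,4)
proof (induction T rule: finite_induct)
  case empty
  then show ?case using seminorm_on_zero[OF N S] by simp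
next
  case (insert x F)
  have "(\<Sum>v\<in>F. g v) \<in> S"
    using insert by (intro subspace_sum[OF S]) auto
  then have "N (g x + (\<Sum>v\<in>F. g v)) \<le> N (g x) + N (\<Sum>v\<in>F. g v)"
    using N insert.prems by (simp add: seminorm_on_def)
  then show ?case using insert by simp
qed

lemma rat_subspace_sum:
  assumes "rat_subspace S" "finite T" "T \<subseteq> S"
  shows "(\<Sum>v\<in>T. of_rat (s v) *\<^sub>R v) \<in> S"
  using assms(2,3)
  by (induction T rule: finite_induct) (use assms(1) in \<open>auto simp: rat_subspace_def\<close>)

lemma rational_approximation_fun:
  fixes u :: "'a \<Rightarrow> real"
  assumes "\<delta> > 0"
  obtains s :: "'a \<Rightarrow> rat" where "\<And>v. \<bar>u v - of_rat (s v)\<bar> < \<delta>"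
proof -
  have "\<exists>q::rat. \<bar>u v - of_rat q\<bar> < \<delta>" for v
  proof -
    obtain r where "r \<in> \<rat>" "\<bar>r - u v\<bar> < \<delta>"
      using rational_approximation[OF assms] .
    then show ?thesis by (metis Rats_cases abs_minus_commute)
  qed
  then show ?thesis using that by metis
qed

lemma rational_combination_approx:
  assumes N: "seminorm_on (span Q) N" and x: "x \<in> span Q" and \<epsilon>: "\<epsilon> > 0"
  obtains T and s :: "'v::real_vector \<Rightarrow> rat"
  where "finite T" "T \<subseteq> Q" "N (x - (\<Sum>v\<in>T. of_rat (s v) *\<^sub>R v)) \<le> \<epsilon>"
proof -
  obtain T u where T: "finite T" "T \<subseteq> Q" and x_eq: "x = (\<Sum>v\<in>T. u v *\<^sub>R v)"
    using x by (auto simp: span_explicit)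
  have T_span: "v \<in> span Q" if "v \<in> T" for v
    using T that by (auto intro: span_base)
  have N_nonneg: "0 \<le> N v" if "v \<in> T" for v
    using seminorm_on_nonneg[OF N subspace_span T_span[OF that]] .
  have N_sum_nonneg: "0 \<le> (\<Sum>v\<in>T. N v)"
    using N_nonneg by (rule sum_nonneg)
  define \<delta> where "\<delta> = \<epsilon> / ((\<Sum>v\<in>T. N v) + 1)"
  have \<delta>: "\<delta> > 0"
    using \<epsilon> N_sum_nonneg by (simp add: \<delta>_def)
  obtain s :: "'v \<Rightarrow> rat" where s: "\<And>v. \<bar>u v - of_rat (s v)\<bar> < \<delta>"
    using rational_approximation_fun[OF \<delta>] by metis
  have "N (x - (\<Sum>v\<in>T. of_rat (s v) *\<^sub>R v)) = N (\<Sum>v\<in>T. (u v - of_rat (s v)) *\<^sub>R v)"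
    by (simp add: x_eq scaleR_diff_left sum_subtractf)
  also have "\<dots> \<le> (\<Sum>v\<in>T. N ((u v - of_rat (s v)) *\<^sub>R v))"
    using T_span by (intro seminorm_on_sum_le[OF N subspace_span T(1)] span_scale)
  also have "\<dots> = (\<Sum>v\<in>T. \<bar>u v - of_rat (s v)\<bar> * N v)"
    using N T_span by (intro sum.cong) (auto simp: seminorm_on_def)
  also have "\<dots> \<le> (\<Sum>v\<in>T. \<delta> * N v)"
    using s N_nonneg by (intro sum_mono mult_right_mono) (auto intro: less_imp_le)
  also have "\<dots> = \<epsilon> * ((\<Sum>v\<in>T. N v) / ((\<Sum>v\<in>T. N v) + 1))"
    by (simp add: \<delta>_def flip: sum_divide_distrib sum_distrib_left)
  also have "\<dots> \<le> \<epsilon>"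
    using \<epsilon> N_sum_nonneg by (intro mult_right_le_one_le) auto
  finally show ?thesis using that T by blast
qed

context
  fixes CQ CR :: "int \<Rightarrow> 'v::real_vector set" and d :: "int \<Rightarrow> 'v \<Rightarrow> 'v"
  assumes cc: "rat_chain_complex CQ CR d"
begin

lemma rat_chain_complex_real_eq_span: "CR k = span (CQ k)"
  using cc by (simp add: rat_chain_complex_def rat_form_of_def)

lemma rat_chain_complex_rat_subspace: "rat_subspace (CQ k)"
  using cc by (simp add: rat_chain_complex_def rat_form_of_def)

lemma rat_chain_complex_subspace: "subspace (CR k)"
  by (simp add: rat_chain_complex_real_eq_span)

lemma rat_chain_complex_rat_subset: "CQ k \<subseteq> CR k"
  by (simp add: rat_chain_complex_real_eq_span span_superset)

lemma rat_chain_complex_add: "x \<in> CR k \<Longrightarrow> y \<in> CR k \<Longrightarrow> d k (x + y) = d k x + d k y"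
  using cc by (simp add: rat_chain_complex_def)

lemma rat_chain_complex_scale: "x \<in> CR k \<Longrightarrow> d k (c *\<^sub>R x) = c *\<^sub>R d k x"
  using cc by (simp add: rat_chain_complex_def)

lemma rat_chain_complex_diff:
  assumes "x \<in> CR k" "y \<in> CR k"
  shows "d k (x - y) = d k x - d k y"
proof -
  have "d k (x - y) = d k (x + (-1) *\<^sub>R y)" by simp
  also have "\<dots> = d k x + (-1) *\<^sub>R d k y"
    using assms subspace_scale[OF rat_chain_complex_subspace]
    by (metis rat_chain_complex_add rat_chain_complex_scale)
  finally show ?thesis by simp
qed

lemma rat_chain_complex_boundary_real: "x \<in> CR k \<Longrightarrow> d k x \<in> CR (k - 1)"
  using cc unfolding rat_chain_complex_def by blast

lemma rat_chain_complex_boundary_rat: "x \<in> CQ k \<Longrightarrow> d k x \<in> CQ (k - 1)"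
  using cc unfolding rat_chain_complex_def by blast

lemma rat_chain_complex_boundary_boundary: "x \<in> CR k \<Longrightarrow> d (k - 1) (d k x) = 0"
  using cc by (simp add: rat_chain_complex_def)

lemma seminorm_on_norm_boundary:
  assumes "norm_on (CR (k - 1)) N"
  shows "seminorm_on (CR k) (N \<circ> d k)"
  using norm_on_imp_seminorm_on[OF assms]
  by (rule seminorm_on_compose)
    (auto simp: rat_chain_complex_boundary_real rat_chain_complex_add rat_chain_complex_scale)

lemma rat_cycle_add_boundary:
  assumes b: "b \<in> cycles CQ d n" and c: "c \<in> CQ (n + 1)"
  shows "b + d (n + 1) c \<in> cycles CQ d n"
proof -
  have b_Q: "b \<in> CQ n" and db: "d n b = 0"
    using b by (auto simp: cycles_def)
  have dc_Q: "d (n + 1) c \<in> CQ n"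
    using rat_chain_complex_boundary_rat[OF c] by simp
  have "b + d (n + 1) c \<in> CQ n"
    using b_Q dc_Q rat_chain_complex_rat_subspace[of n] by (simp add: rat_subspace_def)
  moreover have "d n (b + d (n + 1) c) = d n b + d n (d (n + 1) c)"
    using b_Q dc_Q rat_chain_complex_rat_subset[of n] by (intro rat_chain_complex_add) auto
  moreover have "d n (d (n + 1) c) = 0"
    using rat_chain_complex_boundary_boundary[of c "n + 1"] c rat_chain_complex_rat_subset
    by auto
  ultimately show ?thesis
    using db by (simp add: cycles_def)
qed

lemma rat_boundary_approx:
  assumes N: "norm_on (CR n) N" and c: "c \<in> CR (n + 1)" and \<epsilon>: "\<epsilon> > 0"
  obtains c' where "c' \<in> CQ (n + 1)" "N (d (n + 1) (c - c')) \<le> \<epsilon>"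
proof -
  have "seminorm_on (CR (n + 1)) (N \<circ> d (n + 1))"
    using seminorm_on_norm_boundary[of "n + 1" N] N by simp
  from rational_combination_approx[OF this[unfolded rat_chain_complex_real_eq_span]
      c[unfolded rat_chain_complex_real_eq_span] \<epsilon>]
  obtain T s where T: "finite T" "T \<subseteq> CQ (n + 1)"
    and small: "N (d (n + 1) (c - (\<Sum>v\<in>T. of_rat (s v) *\<^sub>R v))) \<le> \<epsilon>"
    by auto
  show ?thesis
    using rat_subspace_sum[OF rat_chain_complex_rat_subspace T] small by (rule that)
qed

end

theorem lemma2p14:
  fixes CQ CR :: "int \<Rightarrow> 'v::real_vector set"
    and d :: "int \<Rightarrow> 'v \<Rightarrow> 'v"
    and N :: "int \<Rightarrow> 'v \<Rightarrow> real"
    and n :: int and a :: 'v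
  assumes "rat_chain_complex CQ CR d"
    and "\<forall>k. norm_on (CR k) (N k)"
    and "a \<in> cycles CR d n"
    and "\<exists>b\<in>cycles CQ d n. homologous_R CR d n a b"
  shows "\<forall>\<epsilon>>0. \<exists>a'\<in>cycles CQ d n. homologous_R CR d n a' a \<and> N n (a - a') \<le> \<epsilon>"
proof (intro allI impI)
  fix \<epsilon> :: real assume \<epsilon>: "\<epsilon> > 0"
  note cc = assms(1)
  obtain b where b: "b \<in> cycles CQ d n" and "homologous_R CR d n a b"
    using assms(4) ..
  then obtain c where c: "c \<in> CR (n + 1)" and a_b: "a - b = d (n + 1) c"
    by (auto simp: homologous_R_def)
  obtain c' where c': "c' \<in> CQ (n + 1)" and small: "N n (d (n + 1) (c - c')) \<le> \<epsilon>"
    using rat_boundary_approx[OF cc assms(2)[rule_format] c \<epsilon>] .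
  have c'_R: "c' \<in> CR (n + 1)"
    using c' rat_chain_complex_rat_subset[OF cc] by blast
  define a' where "a' = b + d (n + 1) c'"
  have a'_cycle: "a' \<in> cycles CQ d n"
    unfolding a'_def using b c' by (rule rat_cycle_add_boundary[OF cc])
  have "a' - a = d (n + 1) (c' - c)"
    unfolding rat_chain_complex_diff[OF cc c'_R c] using a_b by (simp add: a'_def algebra_simps)
  moreover have "c' - c \<in> CR (n + 1)"
    using c c'_R subspace_diff[OF rat_chain_complex_subspace[OF cc]] by blast
  ultimately have "homologous_R CR d n a' a"
    unfolding homologous_R_def by blast
  moreover have "a - a' = d (n + 1) (c - c')"
    unfolding rat_chain_complex_diff[OF cc c c'_R] using a_b by (simp add: a'_def algebra_simps)
  ultimately show "\<exists>a'\<in>cycles CQ d n. homologous_R CR d n a' a \<and> N n (a - a') \<le> \<epsilon>"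
    using a'_cycle small by (intro bexI[of _ a']) simp_all
qed

end
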